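(* Let $J\subset\mathbb{C}$ be a Jordan curve and let $\gamma:\mathbb{R}/2\pi\mathbb{Z}\to\mathbb{C}$ be a homeomorphic parametrization of $J$ (which fixes the orientation of $J$) with $\gamma(0)=A_0$. Assume that $J$ has continuously turning tangents in a neighborhood of $A_0$. Let $n\ge 3$ and let $a_1,\dots,a_n>0$ satisfy $a_i<\sum_{j\neq i}a_j$ for every $i=1,\dots,n$. Then there exist parameters $0=\sigma_0<\sigma_1<\dots<\sigma_{n-1}<\sigma_n=2\pi$ and a number $\lambda>0$ such that \[ |\gamma(\sigma_i)-\gamma(\sigma_{i-1})|=\lambda a_i\quad\text{for } i=1,\dots,n . \] Equivalently, there is a neatly $J$-cyclic polygon with consecutive side lengths $a_1,\dots,a_n$ whose inscribed similar copy has starting vertex $A_0$.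
   Context: A polygon $Q_n=A_0A_1\cdots A_{n-1}$ is an oriented closed piecewise linear curve with vertices $A_0,\dots,A_{n-1}$ and sides $A_0A_1,\dots,A_{n-2}A_{n-1},A_{n-1}A_0$. For an oriented Jordan curve $J$, $Q_n$ is called neatly $J$-cyclic if it has a similar copy $A_0'A_1'\cdots A_{n-1}'$ whose vertices lie on $J$ and are arranged on $J$ in this order according to the orientation of $J$. "$J$ has continuously turning tangents in a neighborhood of $A_0$" means: there is an open arc $B\subset J$ containing $A_0$ admitting a parametrization $h:(\alpha,\beta)\to B$ that is continuously differentiable with $h'(t)\neq 0$ for all $t$. *)

theory Defs
  imports "HOL-Analysis.Analysis"
begin

text \<open>A homeomorphic parametrization of a Jordan curve by the circle R/2piZ,
  represented as a continuous 2pi-periodic function on R that is injective on [0,2pi).\<close>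
definition circle_param :: "(real \<Rightarrow> complex) \<Rightarrow> bool" where
  "circle_param \<gamma> \<longleftrightarrow> continuous_on UNIV \<gamma> \<and> (\<forall>t. \<gamma> (t + 2*pi) = \<gamma> t)
     \<and> inj_on \<gamma> {0..<2*pi}"

definition cont_turning_tangents_at :: "complex set \<Rightarrow> complex \<Rightarrow> bool" where
  "cont_turning_tangents_at J A \<longleftrightarrow>
     (\<exists>B \<alpha> \<beta> h h' k. B \<subseteq> J \<and> A \<in> B \<and> openin (top_of_set J) B \<and> \<alpha> < \<beta> \<and>
        homeomorphism {\<alpha><..<\<beta>} B h k \<and>
        (\<forall>t\<in>{\<alpha><..<\<beta>}. (h has_vector_derivative h' t) (at t) \<and> h' t \<noteq> 0) \<and>
        continuous_on {\<alpha><..<\<beta>} h')"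

end

theory Submission
  imports Defs
begin

text \<open>Parametrize an inscribed polygon with first vertex \<open>\<gamma> 0\<close> by the parameter gaps between
  consecutive vertices, each gap in \<open>[0, 2\<pi> - \<epsilon>]\<close>. A continuous self-map of this compact convex
  set of gap vectors widens the gaps of sides that are too short relative to the prescribed ratios
  and narrows those of sides that are too long; by Brouwer's theorem it has a fixed point. There
  every ratio is right: otherwise some side that is too long would have gap zero, or some side
  that is too short would have the maximal gap \<open>2\<pi> - \<epsilon>\<close>. The latter is excluded because all
  other vertices then lie within \<open>\<epsilon>\<close> of \<open>\<gamma> 0\<close>, where the tangent makes the curve almost
  straight, so that side is nearly as long as all others together, whereas the polygon
  inequalities make every prescribed ratio less than one half.\<close>

section \<open>Brouwer's fixed point theorem for cubes of varying dimension\<close>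

definition nat_cube :: "nat \<Rightarrow> (nat \<Rightarrow> real) set" where
  "nat_cube m = {x. (\<forall>i<m. 0 \<le> x i \<and> x i \<le> 1) \<and> (\<forall>i. m \<le> i \<longrightarrow> x i = 0)}"

lemma nat_cube_eq_PiE: "nat_cube m = Pi\<^sub>E UNIV (\<lambda>i. if i < m then {0..1} else {0})"
proof (intro set_eqI iffI)
  fix x assume "x \<in> nat_cube m"
  then show "x \<in> Pi\<^sub>E UNIV (\<lambda>i. if i < m then {0..1} else {0})"
    by (simp add: nat_cube_def PiE_iff)
next
  fix x assume "x \<in> Pi\<^sub>E UNIV (\<lambda>i. if i < m then {0..1::real} else {0})"
  then show "x \<in> nat_cube m"
    by (simp add: nat_cube_def PiE_iff) (meson atLeastAtMost_iff not_le singletonD)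
qed

lemma compact_nat_cube: "compact (nat_cube m)"
proof -
  have "compactin (product_topology (\<lambda>i. euclidean) UNIV)
          (Pi\<^sub>E UNIV (\<lambda>i. if i < m then {0..1::real} else {0}))"
    by (subst compactin_PiE) auto
  then show ?thesis
    unfolding nat_cube_eq_PiE euclidean_product_topology by simp
qed

lemma tendsto_fun_componentwise:
  fixes Y :: "'b \<Rightarrow> 'a \<Rightarrow> 'c::topological_space"
  shows "(Y \<longlongrightarrow> z) F \<longleftrightarrow> (\<forall>j. ((\<lambda>k. Y k j) \<longlongrightarrow> z j) F)"
  using limitin_componentwise[of "\<lambda>i. euclidean" UNIV Y z F]
  unfolding euclidean_product_topology by simp

definition cube_grid :: "nat \<Rightarrow> nat \<Rightarrow> (nat \<Rightarrow> nat) \<Rightarrow> nat \<Rightarrow> real" where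
  "cube_grid m p y = (\<lambda>i. if i < m then real (y i) / real p else 0)"

lemma cube_grid_in_nat_cube: "0 < p \<Longrightarrow> \<forall>i<m. y i \<le> p \<Longrightarrow> cube_grid m p y \<in> nat_cube m"
  by (auto simp: nat_cube_def cube_grid_def divide_le_eq_1)

lemma cube_grid_close:
  assumes "\<forall>j<m. q j \<le> y j \<and> y j \<le> q j + 1"
  shows "\<bar>cube_grid m p y j - cube_grid m p q j\<bar> \<le> 1 / real p"
proof (cases "j < m")
  case True
  then have "\<bar>real (y j) - real (q j)\<bar> \<le> 1" using assms by force
  then show ?thesis
    using True by (simp add: cube_grid_def diff_divide_distrib[symmetric] abs_divide divide_right_mono)
qed (simp add: cube_grid_def)

lemma kuhn_approximate_fixpoint:
  fixes f :: "(nat \<Rightarrow> real) \<Rightarrow> nat \<Rightarrow> real"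
  assumes maps: "\<And>x i. x \<in> nat_cube m \<Longrightarrow> i < m \<Longrightarrow> 0 \<le> f x i \<and> f x i \<le> 1" and "0 < p"
  shows "\<exists>z\<in>nat_cube m. \<forall>i<m. \<exists>A\<in>nat_cube m. \<exists>B\<in>nat_cube m.
           (\<forall>j<m. \<bar>A j - z j\<bar> \<le> 1 / real p \<and> \<bar>B j - z j\<bar> \<le> 1 / real p) \<and>
           A i \<le> f A i \<and> f B i \<le> B i"
proof -
  let ?grid = "cube_grid m p"
  \<comment> \<open>label 0 where \<open>f\<close> does not decrease the coordinate; the faces \<open>y i = 0\<close> and \<open>y i = p\<close>
    carry the labels required by Kuhn's lemma\<close>
  define label where
    "label y i = (if y i = 0 \<or> (y i \<noteq> p \<and> ?grid y i \<le> f (?grid y) i) then 0 else (1::nat))" for y i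
  obtain q where q_lt: "\<forall>i<m. q i < p"
    and q_adj: "\<forall>i<m. \<exists>r s. (\<forall>j<m. q j \<le> r j \<and> r j \<le> q j + 1) \<and>
                   (\<forall>j<m. q j \<le> s j \<and> s j \<le> q j + 1) \<and> label r i \<noteq> label s i"
    by (rule kuhn_lemma[OF \<open>0 < p\<close>, of m label]) (use \<open>0 < p\<close> in \<open>auto simp: label_def\<close>)
  have label0: "?grid y i \<le> f (?grid y) i" if "label y i = 0" "\<forall>j<m. y j \<le> p" "i < m" for y i
    using that maps[OF cube_grid_in_nat_cube[OF \<open>0 < p\<close> that(2)] that(3)]
    by (auto simp: label_def cube_grid_def split: if_splits)
  have label1: "f (?grid y) i \<le> ?grid y i" if "label y i \<noteq> 0" "\<forall>j<m. y j \<le> p" "i < m" for y i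
    using that maps[OF cube_grid_in_nat_cube[OF \<open>0 < p\<close> that(2)] that(3)] \<open>0 < p\<close>
    by (auto simp: label_def cube_grid_def split: if_splits)
  have "\<forall>i<m. \<exists>A\<in>nat_cube m. \<exists>B\<in>nat_cube m.
           (\<forall>j<m. \<bar>A j - ?grid q j\<bar> \<le> 1 / real p \<and> \<bar>B j - ?grid q j\<bar> \<le> 1 / real p) \<and>
           A i \<le> f A i \<and> f B i \<le> B i"
  proof (intro allI impI)
    fix i assume i: "i < m"
    obtain r s where r: "\<forall>j<m. q j \<le> r j \<and> r j \<le> q j + 1" and s: "\<forall>j<m. q j \<le> s j \<and> s j \<le> q j + 1"
      and rs: "label r i \<noteq> label s i"
      using q_adj i by blast
    have rp: "\<forall>j<m. r j \<le> p" and sp: "\<forall>j<m. s j \<le> p"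
      using r s q_lt by (auto simp: Suc_le_eq intro: order_trans)
    have grids: "?grid r \<in> nat_cube m" "?grid s \<in> nat_cube m"
      using cube_grid_in_nat_cube[OF \<open>0 < p\<close>] rp sp by auto
    consider "label r i = 0" "label s i \<noteq> 0" | "label s i = 0" "label r i \<noteq> 0"
      using rs unfolding label_def by presburger
    then show "\<exists>A\<in>nat_cube m. \<exists>B\<in>nat_cube m.
           (\<forall>j<m. \<bar>A j - ?grid q j\<bar> \<le> 1 / real p \<and> \<bar>B j - ?grid q j\<bar> \<le> 1 / real p) \<and>
           A i \<le> f A i \<and> f B i \<le> B i"
    proof cases
      case 1
      then show ?thesis
        using label0[OF _ rp i] label1[OF _ sp i] grids cube_grid_close[OF r] cube_grid_close[OF s] by blast
    next
      case 2
      then show ?thesis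
        using label0[OF _ sp i] label1[OF _ rp i] grids cube_grid_close[OF r] cube_grid_close[OF s] by blast
    qed
  qed
  moreover have "?grid q \<in> nat_cube m"
    using cube_grid_in_nat_cube[OF \<open>0 < p\<close>] q_lt by (simp add: less_imp_le)
  ultimately show ?thesis by (rule bexI)
qed

lemma tendsto_nat_cube_if_close:
  assumes Z: "Z \<longlonglongrightarrow> z" "z \<in> nat_cube m" and Y: "\<And>k. Y k \<in> nat_cube m"
    and close: "\<And>k j. j < m \<Longrightarrow> \<bar>Y k j - Z k j\<bar> \<le> \<delta> k" and "\<delta> \<longlonglongrightarrow> 0"
  shows "Y \<longlonglongrightarrow> z"
  unfolding tendsto_fun_componentwise
proof
  fix j
  show "(\<lambda>k. Y k j) \<longlonglongrightarrow> z j"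
  proof (cases "j < m")
    case True
    have "(\<lambda>k. Y k j - Z k j) \<longlonglongrightarrow> 0"
      by (rule tendsto_0_le[OF \<open>\<delta> \<longlonglongrightarrow> 0\<close>, of _ 1])
        (use close[OF True] in \<open>auto intro!: always_eventually order_trans[OF _ abs_ge_self]\<close>)
    moreover have "(\<lambda>k. Z k j) \<longlonglongrightarrow> z j"
      using Z(1) by (simp add: tendsto_fun_componentwise)
    ultimately show ?thesis using tendsto_add by fastforce
  next
    case False
    then show ?thesis using Y Z(2) by (simp add: nat_cube_def)
  qed
qed

lemma brouwer_nat_cube:
  fixes f :: "(nat \<Rightarrow> real) \<Rightarrow> nat \<Rightarrow> real"
  assumes cont: "\<And>i. i < m \<Longrightarrow> continuous_on (nat_cube m) (\<lambda>x. f x i)"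
    and maps: "\<And>x i. x \<in> nat_cube m \<Longrightarrow> i < m \<Longrightarrow> 0 \<le> f x i \<and> f x i \<le> 1"
  shows "\<exists>x\<in>nat_cube m. \<forall>i<m. f x i = x i"
proof -
  have "\<forall>k. \<exists>z. z \<in> nat_cube m \<and> (\<forall>i<m. \<exists>A\<in>nat_cube m. \<exists>B\<in>nat_cube m.
           (\<forall>j<m. \<bar>A j - z j\<bar> \<le> 1 / real (Suc k) \<and> \<bar>B j - z j\<bar> \<le> 1 / real (Suc k)) \<and>
           A i \<le> f A i \<and> f B i \<le> B i)"
    using kuhn_approximate_fixpoint[of m f, OF maps] by blast
  then obtain Z where Z_cube: "\<And>k. Z k \<in> nat_cube m"
    and Z_approx: "\<And>k i. i < m \<Longrightarrow> \<exists>A\<in>nat_cube m. \<exists>B\<in>nat_cube m.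
           (\<forall>j<m. \<bar>A j - Z k j\<bar> \<le> 1 / real (Suc k) \<and> \<bar>B j - Z k j\<bar> \<le> 1 / real (Suc k)) \<and>
           A i \<le> f A i \<and> f B i \<le> B i"
    unfolding choice_iff by blast
  obtain z r where z: "z \<in> nat_cube m" and r: "strict_mono r" and lim: "(Z \<circ> r) \<longlonglongrightarrow> z"
    using compact_imp_seq_compact[OF compact_nat_cube, unfolded seq_compact_def] Z_cube by metis
  have mesh: "(\<lambda>k. 1 / real (Suc (r k))) \<longlonglongrightarrow> 0"
    using LIMSEQ_subseq_LIMSEQ[OF LIMSEQ_inverse_real_of_nat r] by (simp add: o_def inverse_eq_divide)
  show ?thesis
  proof (intro bexI[OF _ z] allI impI)
    fix i assume i: "i < m"
    have "\<forall>k. \<exists>A B. A \<in> nat_cube m \<and> B \<in> nat_cube m \<and>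
      (\<forall>j<m. \<bar>A j - Z (r k) j\<bar> \<le> 1 / real (Suc (r k)) \<and> \<bar>B j - Z (r k) j\<bar> \<le> 1 / real (Suc (r k))) \<and>
      A i \<le> f A i \<and> f B i \<le> B i"
      using Z_approx[OF i] by blast
    then obtain A B where AB: "\<And>k. A k \<in> nat_cube m" "\<And>k. B k \<in> nat_cube m"
      "\<And>k j. j < m \<Longrightarrow> \<bar>A k j - Z (r k) j\<bar> \<le> 1 / real (Suc (r k)) \<and> \<bar>B k j - Z (r k) j\<bar> \<le> 1 / real (Suc (r k))"
      and below: "\<And>k. A k i \<le> f (A k) i" and above: "\<And>k. f (B k) i \<le> B k i"
      unfolding choice_iff by blast
    have A: "A \<longlonglongrightarrow> z" and B: "B \<longlonglongrightarrow> z"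
      using tendsto_nat_cube_if_close[OF lim[unfolded o_def] z _ _ mesh] AB by auto
    have "(\<lambda>k. f (A k) i) \<longlonglongrightarrow> f z i" "(\<lambda>k. f (B k) i) \<longlonglongrightarrow> f z i"
      using AB by (auto intro!: continuous_on_tendsto_compose[OF cont[OF i] _ z] A B)
    moreover have "(\<lambda>k. A k i) \<longlonglongrightarrow> z i" "(\<lambda>k. B k i) \<longlonglongrightarrow> z i"
      using A B by (simp_all add: tendsto_fun_componentwise)
    ultimately have "z i \<le> f z i" "f z i \<le> z i"
      using below above by (auto intro: LIMSEQ_le)
    then show "f z i = z i" by simp
  qed
qed

lemma continuous_on_coordinate [continuous_intros]: "continuous_on S (\<lambda>x::'a \<Rightarrow> 'b::topological_space. x i)"
  by (rule continuous_on_subset[OF continuous_on_product_coordinates]) simp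

lemma sum_diff_telescope:
  fixes \<tau> :: "nat \<Rightarrow> 'a::ab_group_add"
  shows "(\<Sum>i\<in>{1..n}. \<tau> i - \<tau> (i - 1)) = \<tau> n - \<tau> 0"
  by (induction n) (simp_all add: sum.cl_ivl_Suc)

lemma sum_abs_diff_except_one:
  fixes \<tau> :: "nat \<Rightarrow> real"
  assumes j: "j \<in> {1..n}" and closed: "\<tau> n = \<tau> 0"
    and mono: "\<And>i. i \<in> {1..n} - {j} \<Longrightarrow> \<tau> (i - 1) \<le> \<tau> i"
  shows "(\<Sum>i\<in>{1..n} - {j}. \<bar>\<tau> i - \<tau> (i - 1)\<bar>) = \<bar>\<tau> j - \<tau> (j - 1)\<bar>"
proof -
  have "(\<Sum>i\<in>{1..n} - {j}. \<bar>\<tau> i - \<tau> (i - 1)\<bar>) = (\<Sum>i\<in>{1..n} - {j}. \<tau> i - \<tau> (i - 1))"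
    using mono by (intro sum.cong) auto
  also have "\<dots> = \<tau> (j - 1) - \<tau> j"
    using sum.remove[OF _ j, of "\<lambda>i. \<tau> i - \<tau> (i - 1)"] sum_diff_telescope[of \<tau> n] closed by simp
  finally show ?thesis
    using sum_nonneg[of "{1..n} - {j}" "\<lambda>i. \<bar>\<tau> i - \<tau> (i - 1)\<bar>"] by simp
qed

lemma sum_unit_weighted_bounds:
  fixes c g :: "'a \<Rightarrow> real"
  assumes "\<And>i. i \<in> A \<Longrightarrow> 0 \<le> c i \<and> c i \<le> 1" "\<And>i. i \<in> A \<Longrightarrow> 0 \<le> g i \<and> g i \<le> B"
  shows "0 \<le> (\<Sum>i\<in>A. c i * g i) \<and> (\<Sum>i\<in>A. c i * g i) \<le> real (card A) * B"
proof
  show "0 \<le> (\<Sum>i\<in>A. c i * g i)"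
    using assms by (simp add: sum_nonneg)
  have "c i * g i \<le> 1 * B" if "i \<in> A" for i
    using assms[OF that] by (intro mult_mono) auto
  then have "(\<Sum>i\<in>A. c i * g i) \<le> (\<Sum>i\<in>A. B)"
    by (intro sum_mono) simp
  then show "(\<Sum>i\<in>A. c i * g i) \<le> real (card A) * B"
    by simp
qed

lemma sum_zero_pos_and_neg:
  fixes f :: "'a \<Rightarrow> real"
  assumes "finite A" "sum f A = 0" "x \<in> A" "f x \<noteq> 0"
  shows "\<exists>k\<in>A. 0 < f k" and "\<exists>l\<in>A. f l < 0"
proof -
  show "\<exists>k\<in>A. 0 < f k"
  proof (rule ccontr)
    assume "\<not> (\<exists>k\<in>A. 0 < f k)"
    then have "\<forall>k\<in>A. - f k = 0"
      using assms(2) by (subst sum_nonneg_eq_0_iff[OF assms(1), symmetric]) (auto simp: sum_negf)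
    then show False using assms(3,4) by simp
  qed
  show "\<exists>l\<in>A. f l < 0"
  proof (rule ccontr)
    assume "\<not> (\<exists>l\<in>A. f l < 0)"
    then have "\<forall>l\<in>A. f l = 0"
      using assms(2) by (subst sum_nonneg_eq_0_iff[OF assms(1), symmetric]) auto
    then show False using assms(3,4) by simp
  qed
qed

lemma ratio_lt_half_if_lt_rest:
  fixes a :: "'a \<Rightarrow> real"
  assumes "finite A" "i \<in> A" "0 \<le> a i" "a i < (\<Sum>j\<in>A - {i}. a j)"
  shows "a i / (\<Sum>j\<in>A. a j) < 1/2"
proof -
  have "(\<Sum>j\<in>A. a j) = a i + (\<Sum>j\<in>A - {i}. a j)"
    using assms(1,2) by (simp add: sum.remove)
  then show ?thesis using assms(3,4) by (simp add: divide_less_eq)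
qed

lemma exists_ratio_bound:
  fixes r :: "'a \<Rightarrow> real"
  assumes "finite A" "\<forall>j\<in>A. r j < 1/2"
  obtains \<kappa> where "0 < \<kappa>" "\<kappa> < 1" "\<forall>j\<in>A. r j < \<kappa> / (1 + \<kappa>)"
proof -
  define Q where "Q = Max (insert 0 (r ` A))"
  have Q: "0 \<le> Q" "\<forall>j\<in>A. r j \<le> Q"
    using assms by (auto simp: Q_def)
  have "Q < 1/2"
    unfolding Q_def using assms by (subst Max_less_iff) auto
  define \<rho> where "\<rho> = (Q + 1/2) / 2"
  show ?thesis
  proof (rule that[of "\<rho> / (1 - \<rho>)"])
    show "0 < \<rho> / (1 - \<rho>)" "\<rho> / (1 - \<rho>) < 1"
      using Q \<open>Q < 1/2\<close> by (auto simp: \<rho>_def field_simps)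
    have "\<rho> / (1 - \<rho>) / (1 + \<rho> / (1 - \<rho>)) = \<rho>"
      using Q \<open>Q < 1/2\<close> by (simp add: \<rho>_def field_simps)
    moreover have "\<forall>j\<in>A. r j < \<rho>"
      using Q \<open>Q < 1/2\<close> by (auto simp: \<rho>_def)
    ultimately show "\<forall>j\<in>A. r j < \<rho> / (1 - \<rho>) / (1 + \<rho> / (1 - \<rho>))"
      by simp
  qed
qed

section \<open>Chords near a point with a continuous tangent\<close>

lemma circle_param_inj_on:
  assumes "circle_param \<gamma>"
  shows "inj_on \<gamma> {-pi..<pi}"
proof
  fix s t assume s: "s \<in> {-pi..<pi}" and t: "t \<in> {-pi..<pi}" and eq: "\<gamma> s = \<gamma> t"
  define wrap where "wrap x = (if x < 0 then x + 2*pi else x)" for x :: real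
  have "\<gamma> (wrap x) = \<gamma> x" for x
    using assms by (simp add: wrap_def circle_param_def)
  moreover have "wrap x \<in> {0..<2*pi}" if "x \<in> {-pi..<pi}" for x
    using that pi_gt_zero by (auto simp: wrap_def)
  ultimately have "wrap s = wrap t"
    using s t eq assms by (metis circle_param_def inj_onD)
  then show "s = t"
    using s t by (auto simp: wrap_def split: if_splits)
qed

lemma C1_locally_bilipschitz:
  fixes h :: "real \<Rightarrow> 'a::real_normed_vector"
  assumes "open T" "\<tau> \<in> T"
    and der: "\<And>t. t \<in> T \<Longrightarrow> (h has_vector_derivative h' t) (at t)"
    and cont: "continuous_on T h'" and "0 < \<eta>"
  obtains \<rho> where "0 < \<rho>" "cball \<tau> \<rho> \<subseteq> T"
    "\<And>s t. s \<in> cball \<tau> \<rho> \<Longrightarrow> t \<in> cball \<tau> \<rho> \<Longrightarrow>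
       \<bar>norm (h t - h s) - \<bar>t - s\<bar> * norm (h' \<tau>)\<bar> \<le> \<bar>t - s\<bar> * \<eta>"
proof -
  obtain \<delta> where "0 < \<delta>" and \<delta>: "\<And>t. t \<in> T \<Longrightarrow> dist t \<tau> < \<delta> \<Longrightarrow> dist (h' t) (h' \<tau>) < \<eta>"
    using cont assms(2,5) unfolding continuous_on_iff by metis
  obtain \<rho>0 where "0 < \<rho>0" "cball \<tau> \<rho>0 \<subseteq> T"
    using assms(1,2) open_contains_cball by blast
  define \<rho> where "\<rho> = min \<rho>0 (\<delta>/2)"
  have "0 < \<rho>" using \<open>0 < \<rho>0\<close> \<open>0 < \<delta>\<close> by (simp add: \<rho>_def)
  have I: "cball \<tau> \<rho> \<subseteq> T"
    using \<open>cball \<tau> \<rho>0 \<subseteq> T\<close> by (auto simp: \<rho>_def)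
  have lin: "norm (h t - h s - (t - s) *\<^sub>R h' \<tau>) \<le> \<bar>t - s\<bar> * \<eta>"
    if "s \<in> cball \<tau> \<rho>" "t \<in> cball \<tau> \<rho>" for s t
  proof -
    have "norm (h t - h s - (\<lambda>u. u *\<^sub>R h' \<tau>) (t - s)) \<le> norm (t - s) * \<eta>"
    proof (rule differentiable_bound_linearization[where S = "cball \<tau> \<rho>"])
      show "s + x *\<^sub>R (t - s) \<in> cball \<tau> \<rho>" if "x \<in> {0..1}" for x
      proof -
        have "s + x *\<^sub>R (t - s) \<in> closed_segment s t"
          using that by (auto simp: closed_segment_def algebra_simps intro!: exI[of _ x])
        then show ?thesis
          using closed_segment_subset[OF \<open>s \<in> cball \<tau> \<rho>\<close> \<open>t \<in> cball \<tau> \<rho>\<close> convex_cball] by blast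
      qed
      show "(h has_derivative (\<lambda>u. u *\<^sub>R h' x)) (at x within cball \<tau> \<rho>)" if "x \<in> cball \<tau> \<rho>" for x
        using der[of x] I that has_vector_derivative_at_within unfolding has_vector_derivative_def by blast
      show "onorm ((\<lambda>u. u *\<^sub>R h' x) - (\<lambda>u. u *\<^sub>R h' \<tau>)) \<le> \<eta>" if "x \<in> cball \<tau> \<rho>" for x
      proof -
        have "((\<lambda>u. u *\<^sub>R h' x) - (\<lambda>u. u *\<^sub>R h' \<tau>)) = (\<lambda>u. u *\<^sub>R (h' x - h' \<tau>))"
          by (simp add: fun_diff_def algebra_simps)
        moreover have "onorm (\<lambda>u::real. u *\<^sub>R (h' x - h' \<tau>)) = norm (h' x - h' \<tau>)"
          using onorm_scaleR_left[OF bounded_linear_ident, of "h' x - h' \<tau>"] onorm_id[where 'a=real]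
          by simp
        moreover have "dist x \<tau> < \<delta>"
          using that \<open>0 < \<delta>\<close> by (simp add: \<rho>_def dist_commute)
        moreover have "x \<in> T" using I that by blast
        ultimately show ?thesis
          using \<delta>[of x] by (simp add: dist_norm less_imp_le)
      qed
    qed (use \<open>0 < \<rho>\<close> in simp)
    then show ?thesis by simp
  qed
  show ?thesis
  proof (rule that[OF \<open>0 < \<rho>\<close> I])
    fix s t assume "s \<in> cball \<tau> \<rho>" "t \<in> cball \<tau> \<rho>"
    then show "\<bar>norm (h t - h s) - \<bar>t - s\<bar> * norm (h' \<tau>)\<bar> \<le> \<bar>t - s\<bar> * \<eta>"
      using lin[of s t] norm_triangle_ineq3[of "h t - h s" "(t - s) *\<^sub>R h' \<tau>"] by simp
  qed
qed

lemma continuous_inj_on_interval_mono_abs: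
  fixes f :: "real \<Rightarrow> real"
  assumes "continuous_on {a..b} f" "inj_on f {a..b}"
  obtains g where "mono_on {a..b} g" "\<And>s t. \<bar>g s - g t\<bar> = \<bar>f s - f t\<bar>"
proof -
  have "strict_mono_on {a..b} f \<or> strict_antimono_on {a..b} f"
    using injective_eq_monotone_map[of "{a..b}" f] assms by (simp add: is_interval_cc)
  then show ?thesis
  proof
    assume "strict_mono_on {a..b} f"
    then show ?thesis by (intro that[of f] strict_mono_on_imp_mono_on) auto
  next
    assume "strict_antimono_on {a..b} f"
    then have "mono_on {a..b} (\<lambda>s. - f s)"
      by (intro mono_onI) (auto simp: monotone_on_def order.order_iff_strict)
    then show ?thesis by (intro that[of "\<lambda>s. - f s"]) (simp_all add: abs_minus_commute)
  qed
qed

lemma circle_param_local_preimage: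
  assumes cp: "circle_param \<gamma>" and B: "openin (top_of_set (\<gamma> ` {0..2*pi})) B" "\<gamma> 0 \<in> B"
    and k: "continuous_on B k" and V: "open V" "k (\<gamma> 0) \<in> V"
  obtains e where "0 < e" "e \<le> pi/2" "\<And>s. s \<in> {-e..e} \<Longrightarrow> \<gamma> s \<in> B \<and> k (\<gamma> s) \<in> V"
proof -
  define J where "J = \<gamma> ` {0..2*pi}"
  obtain U1 where "open U1" "B = J \<inter> U1"
    using B(1) by (auto simp: openin_open J_def)
  have "openin (top_of_set B) (B \<inter> k -` V)"
    by (rule continuous_openin_preimage_gen[OF k V(1)])
  then obtain U2 where "open U2" and U2: "B \<inter> k -` V = B \<inter> U2"
    by (auto simp: openin_open)
  have "\<gamma> 0 \<in> U1 \<inter> U2"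
    using B(2) \<open>B = J \<inter> U1\<close> U2 V(2) by auto
  moreover have "open (\<gamma> -` (U1 \<inter> U2))"
    using cp \<open>open U1\<close> \<open>open U2\<close> by (simp add: circle_param_def open_vimage open_Int)
  ultimately obtain e0 where "0 < e0" and e0: "ball 0 e0 \<subseteq> \<gamma> -` (U1 \<inter> U2)"
    by (meson open_contains_ball vimageI2)
  show ?thesis
  proof (rule that[of "min (e0/2) (pi/2)"])
    show "0 < min (e0/2) (pi/2)" "min (e0/2) (pi/2) \<le> pi/2"
      using \<open>0 < e0\<close> by auto
    fix s assume s: "s \<in> {-min (e0/2) (pi/2)..min (e0/2) (pi/2)}"
    have "\<gamma> s \<in> J"
      using s cp unfolding J_def circle_param_def
      by (cases "s < 0") (force intro: image_eqI[of _ _ "s + 2*pi"], auto)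
    moreover have "s \<in> ball 0 e0" using s \<open>0 < e0\<close> by auto
    then have "\<gamma> s \<in> U1 \<inter> U2" using e0 by blast
    ultimately have "\<gamma> s \<in> B \<inter> U2" using \<open>B = J \<inter> U1\<close> by blast
    then show "\<gamma> s \<in> B \<and> k (\<gamma> s) \<in> V" using U2 by blast
  qed
qed

lemma cont_turning_tangents_chord_bounds:
  assumes cp: "circle_param \<gamma>" and ct: "cont_turning_tangents_at (\<gamma> ` {0..2*pi}) (\<gamma> 0)"
    and \<kappa>: "0 < \<kappa>" "\<kappa> < 1"
  obtains e \<phi> c1 c2 where "0 < e" "e \<le> pi/2" "\<kappa> * c2 \<le> c1" "mono_on {-e..e} \<phi>"
    "\<And>s t. s \<in> {-e..e} \<Longrightarrow> t \<in> {-e..e} \<Longrightarrow>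
       c1 * \<bar>\<phi> s - \<phi> t\<bar> \<le> cmod (\<gamma> s - \<gamma> t) \<and> cmod (\<gamma> s - \<gamma> t) \<le> c2 * \<bar>\<phi> s - \<phi> t\<bar>"
proof -
  obtain B \<alpha> \<beta> h h' k where B: "openin (top_of_set (\<gamma> ` {0..2*pi})) B" "\<gamma> 0 \<in> B"
    and hom: "homeomorphism {\<alpha><..<\<beta>} B h k"
    and der: "\<And>t. t \<in> {\<alpha><..<\<beta>} \<Longrightarrow> (h has_vector_derivative h' t) (at t) \<and> h' t \<noteq> 0"
    and h'_cont: "continuous_on {\<alpha><..<\<beta>} h'"
    using ct unfolding cont_turning_tangents_at_def by metis
  have hk: "\<And>y. y \<in> B \<Longrightarrow> h (k y) = y" and "k ` B = {\<alpha><..<\<beta>}" and k_cont: "continuous_on B k"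
    using hom by (auto simp: homeomorphism_def)
  define \<tau> where "\<tau> = k (\<gamma> 0)"
  have \<tau>: "\<tau> \<in> {\<alpha><..<\<beta>}" using \<open>k ` B = _\<close> B(2) by (auto simp: \<tau>_def)
  define c where "c = norm (h' \<tau>)"
  have "0 < c" using der[OF \<tau>] by (simp add: c_def)
  \<comment> \<open>with \<open>\<eta>\<close> so chosen, \<open>\<kappa> (c + \<eta>) = c - \<eta>\<close>\<close>
  define \<eta> where "\<eta> = c * (1 - \<kappa>) / (1 + \<kappa>)"
  have "0 < \<eta>" using \<open>0 < c\<close> \<kappa> by (simp add: \<eta>_def)
  obtain \<rho> where "0 < \<rho>" and "cball \<tau> \<rho> \<subseteq> {\<alpha><..<\<beta>}"
    and h_bounds: "\<And>s t. s \<in> cball \<tau> \<rho> \<Longrightarrow> t \<in> cball \<tau> \<rho> \<Longrightarrow>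
       \<bar>norm (h t - h s) - \<bar>t - s\<bar> * c\<bar> \<le> \<bar>t - s\<bar> * \<eta>"
    using C1_locally_bilipschitz[of "{\<alpha><..<\<beta>}" \<tau> h h' \<eta>] \<tau> der h'_cont \<open>0 < \<eta>\<close>
    unfolding c_def by auto
  have "k (\<gamma> 0) \<in> ball \<tau> \<rho>" using \<open>0 < \<rho>\<close> by (simp add: \<tau>_def)
  then obtain e where e: "0 < e" "e \<le> pi/2" and near: "\<And>s. s \<in> {-e..e} \<Longrightarrow> \<gamma> s \<in> B \<and> k (\<gamma> s) \<in> ball \<tau> \<rho>"
    using circle_param_local_preimage[OF cp B k_cont open_ball] by metis
  define \<phi>0 where "\<phi>0 s = k (\<gamma> s)" for s
  have "continuous_on {-e..e} \<phi>0"
    unfolding \<phi>0_def using cp near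
    by (intro continuous_on_compose2[OF k_cont continuous_on_subset]) (auto simp: circle_param_def)
  moreover have "inj_on \<phi>0 {-e..e}"
  proof (rule inj_onI)
    fix s t assume st: "s \<in> {-e..e}" "t \<in> {-e..e}" "\<phi>0 s = \<phi>0 t"
    then have "\<gamma> s = \<gamma> t" using hk near by (metis \<phi>0_def)
    moreover have "{-e..e} \<subseteq> {-pi..<pi}" using e pi_gt_zero by auto
    ultimately show "s = t" using inj_onD[OF circle_param_inj_on[OF cp]] st by blast
  qed
  ultimately obtain \<phi> where "mono_on {-e..e} \<phi>" and \<phi>: "\<And>s t. \<bar>\<phi> s - \<phi> t\<bar> = \<bar>\<phi>0 s - \<phi>0 t\<bar>"
    using continuous_inj_on_interval_mono_abs by blast
  show ?thesis
  proof (rule that[OF e _ \<open>mono_on {-e..e} \<phi>\<close>])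
    show "\<kappa> * (c + \<eta>) \<le> c - \<eta>"
      using \<kappa> by (simp add: \<eta>_def field_simps)
    fix s t assume "s \<in> {-e..e}" "t \<in> {-e..e}"
    then have "\<gamma> s = h (\<phi>0 s)" "\<gamma> t = h (\<phi>0 t)" and "\<phi>0 s \<in> cball \<tau> \<rho>" "\<phi>0 t \<in> cball \<tau> \<rho>"
      using hk near by (auto simp: \<phi>0_def less_imp_le)
    then show "(c - \<eta>) * \<bar>\<phi> s - \<phi> t\<bar> \<le> cmod (\<gamma> s - \<gamma> t) \<and> cmod (\<gamma> s - \<gamma> t) \<le> (c + \<eta>) * \<bar>\<phi> s - \<phi> t\<bar>"
      using h_bounds[of "\<phi>0 t" "\<phi>0 s"] by (simp add: \<phi> abs_le_iff algebra_simps)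
  qed
qed

lemma long_gap_side_dominates:
  fixes \<gamma> :: "real \<Rightarrow> complex" and \<phi> :: "real \<Rightarrow> real" and \<sigma> :: "nat \<Rightarrow> real"
  assumes per: "\<And>x. \<gamma> (x + 2*pi) = \<gamma> x"
    and mono: "mono_on {-e..e} \<phi>"
    and bounds: "\<And>s t. s \<in> {-e..e} \<Longrightarrow> t \<in> {-e..e} \<Longrightarrow>
       c1 * \<bar>\<phi> s - \<phi> t\<bar> \<le> cmod (\<gamma> s - \<gamma> t) \<and> cmod (\<gamma> s - \<gamma> t) \<le> c2 * \<bar>\<phi> s - \<phi> t\<bar>"
    and \<kappa>: "\<kappa> * c2 \<le> c1" "0 \<le> \<kappa>"
    and \<sigma>: "\<sigma> 0 = 0" "\<sigma> n = 2*pi" "\<And>i. i < n \<Longrightarrow> \<sigma> i \<le> \<sigma> (Suc i)"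
    and j: "j \<in> {1..n}" and long: "2*pi - e \<le> \<sigma> j - \<sigma> (j - 1)"
  shows "\<kappa> * (\<Sum>i\<in>{1..n} - {j}. cmod (\<gamma> (\<sigma> i) - \<gamma> (\<sigma> (i - 1)))) \<le> cmod (\<gamma> (\<sigma> j) - \<gamma> (\<sigma> (j - 1)))"
proof -
  have \<sigma>_le: "\<sigma> i \<le> \<sigma> i'" if "i \<le> i'" "i' \<le> n" for i i'
    by (rule lift_Suc_mono_le_ivl[of "{..<n}"]) (use \<sigma>(3) that in auto)
  \<comment> \<open>shifting the vertices after the long gap back by \<open>2\<pi>\<close> puts all of them into \<open>[-e, e]\<close>\<close>
  define s where "s i = (if i < j then \<sigma> i else \<sigma> i - 2*pi)" for i
  have gap_ends: "0 \<le> \<sigma> (j - 1)" "\<sigma> j \<le> 2*pi"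
    using \<sigma>_le[of 0 "j - 1"] \<sigma>_le[of j n] j \<sigma>(1,2) by auto
  have s_near: "s i \<in> {-e..e}" if "i \<le> n" for i
  proof (cases "i < j")
    case True
    then have "\<sigma> i \<le> \<sigma> (j - 1)" using \<sigma>_le[of i "j - 1"] j by simp
    then show ?thesis
      using True \<sigma>_le[of 0 i] that long gap_ends \<sigma>(1) by (auto simp: s_def)
  next
    case False
    then show ?thesis
      using \<sigma>_le[of j i] \<sigma>_le[of i n] that long gap_ends \<sigma>(2) by (auto simp: s_def)
  qed
  have \<gamma>_s: "\<gamma> (s i) = \<gamma> (\<sigma> i)" for i
    using per[of "\<sigma> i - 2*pi"] by (simp add: s_def)
  define \<tau> where "\<tau> i = \<phi> (s i)" for i
  define d where "d i = cmod (\<gamma> (\<sigma> i) - \<gamma> (\<sigma> (i - 1)))" for i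
  have d_bounds: "c1 * \<bar>\<tau> i - \<tau> (i - 1)\<bar> \<le> d i \<and> d i \<le> c2 * \<bar>\<tau> i - \<tau> (i - 1)\<bar>" if "i \<in> {1..n}" for i
    using bounds[OF s_near[of i] s_near[of "i - 1"]] that by (auto simp: d_def \<tau>_def \<gamma>_s)
  have "(\<Sum>i\<in>{1..n} - {j}. \<bar>\<tau> i - \<tau> (i - 1)\<bar>) = \<bar>\<tau> j - \<tau> (j - 1)\<bar>"
  proof (rule sum_abs_diff_except_one[OF j])
    show "\<tau> n = \<tau> 0" using j \<sigma>(1,2) by (simp add: \<tau>_def s_def)
    fix i assume i: "i \<in> {1..n} - {j}"
    then have "s (i - 1) \<le> s i" using \<sigma>(3)[of "i - 1"] by (auto simp: s_def)
    then show "\<tau> (i - 1) \<le> \<tau> i"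
      using mono_onD[OF mono s_near[of "i - 1"] s_near[of i]] i by (auto simp: \<tau>_def)
  qed
  then have "(\<Sum>i\<in>{1..n} - {j}. c2 * \<bar>\<tau> i - \<tau> (i - 1)\<bar>) = c2 * \<bar>\<tau> j - \<tau> (j - 1)\<bar>"
    by (simp add: sum_distrib_left[symmetric])
  moreover have "(\<Sum>i\<in>{1..n} - {j}. d i) \<le> (\<Sum>i\<in>{1..n} - {j}. c2 * \<bar>\<tau> i - \<tau> (i - 1)\<bar>)"
    by (rule sum_mono) (use d_bounds in auto)
  ultimately have "(\<Sum>i\<in>{1..n} - {j}. d i) \<le> c2 * \<bar>\<tau> j - \<tau> (j - 1)\<bar>"
    by simp
  then have "\<kappa> * (\<Sum>i\<in>{1..n} - {j}. d i) \<le> \<kappa> * c2 * \<bar>\<tau> j - \<tau> (j - 1)\<bar>"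
    using \<kappa>(2) by (simp add: mult_left_mono mult.assoc)
  also have "\<dots> \<le> c1 * \<bar>\<tau> j - \<tau> (j - 1)\<bar>"
    using \<kappa>(1) by (simp add: mult_right_mono)
  also have "\<dots> \<le> d j"
    using d_bounds[OF j] by simp
  finally show ?thesis by (simp add: d_def)
qed

section \<open>The fixed point argument\<close>

locale polygon_fixpoint =
  fixes \<gamma> :: "real \<Rightarrow> complex" and a :: "nat \<Rightarrow> real" and n :: nat and \<epsilon> \<kappa> :: real
  assumes \<gamma>_cont: "continuous_on UNIV \<gamma>" and \<gamma>_inj: "inj_on \<gamma> {0..<2*pi}"
    and n_ge_3: "3 \<le> n" and a_pos: "\<And>i. i \<in> {1..n} \<Longrightarrow> 0 < a i"
    and \<epsilon>: "0 < \<epsilon>" "\<epsilon> \<le> pi/2"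
    and \<kappa>_nonneg: "0 \<le> \<kappa>"
    and a_lt: "\<And>j. j \<in> {1..n} \<Longrightarrow> a j / (\<Sum>i\<in>{1..n}. a i) < \<kappa> / (1 + \<kappa>)"
    and long_gap: "\<And>\<sigma> j. \<sigma> 0 = 0 \<Longrightarrow> \<sigma> n = 2*pi \<Longrightarrow> (\<And>i. i < n \<Longrightarrow> \<sigma> i \<le> \<sigma> (Suc i)) \<Longrightarrow>
       j \<in> {1..n} \<Longrightarrow> 2*pi - \<epsilon> \<le> \<sigma> j - \<sigma> (j - 1) \<Longrightarrow>
       \<kappa> * (\<Sum>i\<in>{1..n} - {j}. cmod (\<gamma> (\<sigma> i) - \<gamma> (\<sigma> (i - 1)))) \<le> cmod (\<gamma> (\<sigma> j) - \<gamma> (\<sigma> (j - 1)))"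
begin

text \<open>A configuration is given by the parameter gaps \<open>u 1, \<dots>, u (n - 1)\<close>; the last gap
  is whatever remains of \<open>2\<pi>\<close>. Each gap is kept in \<open>[0, max_gap]\<close>, so that a gap of maximal
  length is long enough for \<open>long_gap\<close> to apply.\<close>

definition max_gap :: real where
  "max_gap = 2*pi - \<epsilon>"

definition target :: "nat \<Rightarrow> real" where
  "target i = a i / (\<Sum>j\<in>{1..n}. a j)"

definition vertex :: "(nat \<Rightarrow> real) \<Rightarrow> nat \<Rightarrow> real" where
  "vertex u k = (if n \<le> k then 2*pi else \<Sum>i\<in>{1..k}. u i)"

definition gap :: "(nat \<Rightarrow> real) \<Rightarrow> nat \<Rightarrow> real" where
  "gap u i = vertex u i - vertex u (i - 1)"

definition side :: "(nat \<Rightarrow> real) \<Rightarrow> nat \<Rightarrow> real" where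
  "side u i = cmod (\<gamma> (vertex u i) - \<gamma> (vertex u (i - 1)))"

definition perimeter :: "(nat \<Rightarrow> real) \<Rightarrow> real" where
  "perimeter u = (\<Sum>i\<in>{1..n}. side u i)"

definition defect :: "(nat \<Rightarrow> real) \<Rightarrow> nat \<Rightarrow> real" where
  "defect u i = target i - side u i / perimeter u"

definition admissible :: "(nat \<Rightarrow> real) set" where
  "admissible = {u. (\<forall>i\<in>{1..n-1}. 0 \<le> u i \<and> u i \<le> max_gap) \<and>
     \<epsilon> \<le> (\<Sum>i\<in>{1..n-1}. u i) \<and> (\<Sum>i\<in>{1..n-1}. u i) \<le> 2*pi}"

text \<open>The gap of a side that is too short (positive defect) grows in proportion to its room
  below \<open>max_gap\<close>, the gap of a side that is too long shrinks in proportion to its length. The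
  weights \<open>excess\<close> and \<open>room\<close> make the changes sum to zero, and \<open>step\<close> keeps every gap
  within its bounds.\<close>

definition excess :: "(nat \<Rightarrow> real) \<Rightarrow> real" where
  "excess u = (\<Sum>i\<in>{1..n}. max 0 (- defect u i) * gap u i)"

definition room :: "(nat \<Rightarrow> real) \<Rightarrow> real" where
  "room u = (\<Sum>i\<in>{1..n}. max 0 (defect u i) * (max_gap - gap u i))"

definition step :: real where
  "step = 1 / (real n * max_gap + 1)"

definition transfer :: "(nat \<Rightarrow> real) \<Rightarrow> nat \<Rightarrow> real" where
  "transfer u i = step * (excess u * max 0 (defect u i) * (max_gap - gap u i)
                          - room u * max 0 (- defect u i) * gap u i)"

definition adjust :: "(nat \<Rightarrow> real) \<Rightarrow> nat \<Rightarrow> real" where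
  "adjust u i = u i + transfer u i"

lemma max_gap_bounds: "\<epsilon> \<le> max_gap" "max_gap < 2*pi"
  using \<epsilon> pi_gt_zero unfolding max_gap_def by linarith+

lemma sum_a_pos: "0 < (\<Sum>i\<in>{1..n}. a i)"
  by (rule sum_pos) (use a_pos n_ge_3 in auto)

lemma target_pos: "i \<in> {1..n} \<Longrightarrow> 0 < target i"
  using a_pos sum_a_pos by (simp add: target_def)

lemma sum_target: "(\<Sum>i\<in>{1..n}. target i) = 1"
  using sum_a_pos by (simp add: target_def sum_divide_distrib[symmetric])

lemma target_le_1: "i \<in> {1..n} \<Longrightarrow> target i \<le> 1"
  using member_le_sum[of i "{1..n}" target] target_pos sum_target by (simp add: less_imp_le)

lemma sum_split_last: "(\<Sum>i\<in>{1..n}. f i) = (\<Sum>i\<in>{1..n-1}. f i) + f n"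
proof -
  have "{1..n} = insert n {1..n-1}" "n \<notin> {1..n-1}" using n_ge_3 by auto
  then show ?thesis by (simp add: add.commute)
qed

lemma vertex_0: "vertex u 0 = 0"
  using n_ge_3 by (simp add: vertex_def)

lemma vertex_n: "vertex u n = 2*pi"
  by (simp add: vertex_def)

lemma gap_eq: "i \<in> {1..n-1} \<Longrightarrow> gap u i = u i"
  by (cases i) (auto simp: gap_def vertex_def)

lemma gap_last: "gap u n = 2*pi - (\<Sum>i\<in>{1..n-1}. u i)"
  using n_ge_3 by (simp add: gap_def vertex_def)

lemma gap_bounds:
  assumes "u \<in> admissible" "i \<in> {1..n}"
  shows "0 \<le> gap u i \<and> gap u i \<le> max_gap"
proof (cases "i = n")
  case True
  then show ?thesis using assms(1) by (simp add: gap_last admissible_def max_gap_def)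
next
  case False
  then have "i \<in> {1..n-1}" using assms(2) by auto
  then show ?thesis using assms(1) by (simp add: gap_eq admissible_def)
qed

lemma vertex_mono: "u \<in> admissible \<Longrightarrow> i < n \<Longrightarrow> vertex u i \<le> vertex u (Suc i)"
  using gap_bounds[of u "Suc i"] by (simp add: gap_def)

lemma perimeter_pos:
  assumes u: "u \<in> admissible"
  shows "0 < perimeter u"
proof (rule ccontr)
  assume "\<not> 0 < perimeter u"
  then have "perimeter u = 0"
    using sum_nonneg[of "{1..n}" "side u"] by (simp add: perimeter_def side_def)
  then have "\<forall>i\<in>{1..n}. side u i = 0"
    unfolding perimeter_def by (subst (asm) sum_nonneg_eq_0_iff) (auto simp: side_def)
  \<comment> \<open>all vertices except the last then coincide with \<open>\<gamma> 0\<close>, so by injectivity all gaps vanish\<close>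
  then have "vertex u k = 0" if "k \<le> n - 1" for k
    using that
  proof (induction k)
    case (Suc k)
    then have "\<gamma> (vertex u (Suc k)) = \<gamma> 0"
      by (simp add: side_def)
    moreover have "Suc k \<in> {1..n}" using Suc.prems by auto
    then have "vertex u (Suc k) \<in> {0..<2*pi}"
      using Suc gap_bounds[OF u, of "Suc k"] max_gap_bounds by (auto simp: gap_def)
    ultimately show ?case
      using \<gamma>_inj pi_gt_zero by (auto dest: inj_onD)
  qed (simp add: vertex_0)
  moreover have "vertex u (n - 1) = (\<Sum>i\<in>{1..n-1}. u i)"
    using n_ge_3 by (simp add: vertex_def)
  ultimately show False
    using u \<epsilon> by (simp add: admissible_def)
qed

lemma abs_defect_le_1:
  assumes u: "u \<in> admissible" and i: "i \<in> {1..n}"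
  shows "\<bar>defect u i\<bar> \<le> 1"
proof -
  have "side u i \<le> perimeter u"
    unfolding perimeter_def using i by (intro member_le_sum) (auto simp: side_def)
  then have "0 \<le> side u i / perimeter u \<and> side u i / perimeter u \<le> 1"
    using perimeter_pos[OF u] by (simp add: side_def)
  then show ?thesis
    using target_pos[OF i] target_le_1[OF i] by (auto simp: defect_def abs_le_iff)
qed

lemma sum_defect: "u \<in> admissible \<Longrightarrow> (\<Sum>i\<in>{1..n}. defect u i) = 0"
  using perimeter_pos[of u] sum_target
  by (simp add: defect_def sum_subtractf sum_divide_distrib[symmetric] perimeter_def)

lemma defect_pos_if_gap_0: "i \<in> {1..n} \<Longrightarrow> gap u i = 0 \<Longrightarrow> 0 < defect u i"
  using target_pos[of i] by (simp add: defect_def side_def gap_def)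

lemma defect_neg_if_gap_max:
  assumes u: "u \<in> admissible" and j: "j \<in> {1..n}" and "gap u j = max_gap"
  shows "defect u j < 0"
proof -
  have "\<kappa> * (\<Sum>i\<in>{1..n} - {j}. side u i) \<le> side u j"
    unfolding side_def
    by (rule long_gap[of "vertex u" j])
      (use vertex_0 vertex_n vertex_mono[OF u] j \<open>gap u j = max_gap\<close> in \<open>auto simp: gap_def max_gap_def\<close>)
  moreover have "perimeter u = side u j + (\<Sum>i\<in>{1..n} - {j}. side u i)"
    unfolding perimeter_def using j by (simp add: sum.remove)
  ultimately have "\<kappa> * perimeter u \<le> (1 + \<kappa>) * side u j"
    by (simp add: algebra_simps)
  then have "\<kappa> / (1 + \<kappa>) \<le> side u j / perimeter u"
    using perimeter_pos[OF u] \<kappa>_nonneg by (simp add: divide_le_eq le_divide_eq mult.commute)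
  then show ?thesis
    using a_lt[OF j] by (simp add: defect_def target_def)
qed

lemma excess_bounds:
  assumes u: "u \<in> admissible"
  shows "0 \<le> excess u \<and> excess u \<le> real n * max_gap"
proof -
  have "0 \<le> excess u \<and> excess u \<le> real (card {1..n}) * max_gap"
    unfolding excess_def
    by (rule sum_unit_weighted_bounds) (use abs_defect_le_1[OF u] gap_bounds[OF u] in \<open>auto simp: abs_le_iff\<close>)
  then show ?thesis by simp
qed

lemma room_bounds:
  assumes u: "u \<in> admissible"
  shows "0 \<le> room u \<and> room u \<le> real n * max_gap"
proof -
  have "0 \<le> room u \<and> room u \<le> real (card {1..n}) * max_gap"
    unfolding room_def
    by (rule sum_unit_weighted_bounds) (use abs_defect_le_1[OF u] gap_bounds[OF u] in \<open>auto simp: abs_le_iff\<close>)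
  then show ?thesis by simp
qed

lemma step_pos: "0 < step"
  using max_gap_bounds \<epsilon> by (simp add: step_def add_nonneg_pos)

lemma step_mult_le_1: "0 \<le> x \<Longrightarrow> x \<le> real n * max_gap \<Longrightarrow> step * x \<le> 1"
  using max_gap_bounds \<epsilon> by (simp add: step_def)

lemma sum_transfer: "(\<Sum>i\<in>{1..n}. transfer u i) = 0"
proof -
  have "(\<Sum>i\<in>{1..n}. transfer u i) =
      step * (excess u * (\<Sum>i\<in>{1..n}. max 0 (defect u i) * (max_gap - gap u i))
              - room u * (\<Sum>i\<in>{1..n}. max 0 (- defect u i) * gap u i))"
    by (simp add: transfer_def sum_distrib_left sum_subtractf mult.assoc right_diff_distrib)
  then show ?thesis by (simp add: excess_def room_def)
qed

lemma transfer_bounds: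
  assumes u: "u \<in> admissible" and i: "i \<in> {1..n}"
  shows "- gap u i \<le> transfer u i \<and> transfer u i \<le> max_gap - gap u i"
proof -
  have g: "0 \<le> gap u i" "gap u i \<le> max_gap" using gap_bounds[OF u i] by auto
  have d: "\<bar>defect u i\<bar> \<le> 1" using abs_defect_le_1[OF u i] .
  have weights: "0 \<le> step * excess u" "step * excess u \<le> 1" "0 \<le> step * room u" "step * room u \<le> 1"
    using step_pos excess_bounds[OF u] room_bounds[OF u] step_mult_le_1 by auto
  show ?thesis
  proof (cases "0 \<le> defect u i")
    case True
    define c where "c = step * excess u * defect u i"
    have "transfer u i = c * (max_gap - gap u i)"
      using True by (simp add: transfer_def c_def)
    moreover have "0 \<le> c"
      unfolding c_def using weights True by simp
    moreover have "c \<le> 1"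
      unfolding c_def by (rule mult_le_one) (use weights True d in auto)
    ultimately show ?thesis
      using g mult_right_mono[of c 1 "max_gap - gap u i"] by (smt (verit) mult_nonneg_nonneg)
  next
    case False
    define c where "c = step * room u * (- defect u i)"
    have "transfer u i = - (c * gap u i)"
      using False by (simp add: transfer_def c_def)
    moreover have "0 \<le> c"
      unfolding c_def by (rule mult_nonneg_nonneg) (use weights False in auto)
    moreover have "c \<le> 1"
      unfolding c_def by (rule mult_le_one) (use weights False d in auto)
    ultimately show ?thesis
      using g mult_right_mono[of c 1 "gap u i"] by (smt (verit) mult_nonneg_nonneg)
  qed
qed

lemma adjust_admissible:
  assumes u: "u \<in> admissible"
  shows "adjust u \<in> admissible"
proof -
  have "(\<Sum>i\<in>{1..n-1}. adjust u i) = (\<Sum>i\<in>{1..n-1}. u i) - transfer u n"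
    using sum_transfer[of u] sum_split_last[of "transfer u"] by (simp add: adjust_def sum.distrib)
  moreover have "0 \<le> gap u n + transfer u n" "gap u n + transfer u n \<le> max_gap"
    using transfer_bounds[OF u, of n] n_ge_3 by auto
  moreover have "0 \<le> adjust u i \<and> adjust u i \<le> max_gap" if "i \<in> {1..n-1}" for i
  proof -
    have "i \<in> {1..n}" using that by auto
    then show ?thesis using transfer_bounds[OF u, of i] gap_eq[OF that] by (simp add: adjust_def)
  qed
  ultimately show ?thesis
    using max_gap_bounds by (auto simp: admissible_def gap_last max_gap_def)
qed

text \<open>If the transfer vanishes but some defect does not, then there are sides with positive and
  with negative defect. Either no gap of a too long side is positive, and then that side has
  length zero, or \<open>excess u > 0\<close> and the gap of a too short side must be maximal; both contradict
  the sign of the defect.\<close>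

lemma defect_zero_if_transfer_zero:
  assumes u: "u \<in> admissible" and zero: "\<forall>i\<in>{1..n-1}. transfer u i = 0"
  shows "\<forall>i\<in>{1..n}. defect u i = 0"
proof (rule ccontr)
  assume "\<not> (\<forall>i\<in>{1..n}. defect u i = 0)"
  then have "\<exists>k\<in>{1..n}. 0 < defect u k" "\<exists>l\<in>{1..n}. defect u l < 0"
    using sum_zero_pos_and_neg[of "{1..n}" "defect u"] sum_defect[OF u] by auto
  then obtain k l where k: "k \<in> {1..n}" "0 < defect u k" and l: "l \<in> {1..n}" "defect u l < 0"
    by blast
  have transfer_0: "transfer u i = 0" if "i \<in> {1..n}" for i
    using zero sum_transfer[of u] sum_split_last[of "transfer u"] that by (cases "i = n") auto
  show False
  proof (cases "excess u = 0")
    case True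
    then have "max 0 (- defect u l) * gap u l = 0"
      using l(1) gap_bounds[OF u] unfolding excess_def
      by (subst (asm) sum_nonneg_eq_0_iff) auto
    then show False using defect_pos_if_gap_0[of l u] l by simp
  next
    case False
    then have "0 < excess u" using excess_bounds[OF u] by simp
    then have "gap u k = max_gap"
      using transfer_0[OF k(1)] k(2) step_pos by (simp add: transfer_def)
    then show False using defect_neg_if_gap_max[OF u k(1)] k(2) by simp
  qed
qed

definition retract :: "(nat \<Rightarrow> real) \<Rightarrow> nat \<Rightarrow> real" where
  "retract v i = v i * (2*pi) / max (2*pi) (\<Sum>j\<in>{1..n-1}. v j)
                 + max 0 (\<epsilon> - (\<Sum>j\<in>{1..n-1}. v j)) / real (n - 1)"

lemma retract_admissible:
  assumes v: "\<forall>i\<in>{1..n-1}. 0 \<le> v i \<and> v i \<le> max_gap"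
  shows "retract v \<in> admissible"
proof -
  define T where "T = (\<Sum>j\<in>{1..n-1}. v j)"
  have "0 \<le> T" unfolding T_def by (rule sum_nonneg) (use v in auto)
  have vT: "v i \<le> T" if "i \<in> {1..n-1}" for i
    unfolding T_def by (rule member_le_sum) (use v that in auto)
  define c where "c = 2*pi / max (2*pi) T"
  define t where "t = max 0 (\<epsilon> - T) / real (n - 1)"
  have n1: "1 \<le> real (n - 1)" using n_ge_3 by simp
  have retract_eq: "retract v i = c * v i + t" for i
    unfolding retract_def c_def t_def T_def by simp
  have "0 < max (2*pi) T" by (rule less_le_trans[OF _ max.cobounded1]) simp
  then have c: "0 < c" "c \<le> 1" by (auto simp: c_def divide_le_eq_1)
  have "0 \<le> t" using n1 by (simp add: t_def)
  have coords: "0 \<le> retract v i \<and> retract v i \<le> max_gap" if i: "i \<in> {1..n-1}" for i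
  proof (cases "\<epsilon> \<le> T")
    case True
    have "0 \<le> v i" "v i \<le> max_gap" using v i by auto
    have "t = 0" using True by (simp add: t_def)
    moreover have "c * v i \<le> v i" using c v i by (simp add: mult_left_le_one_le)
    ultimately show ?thesis using retract_eq[of i] c \<open>0 \<le> v i\<close> \<open>v i \<le> max_gap\<close> by auto
  next
    case False
    then have "T < 2*pi" using \<epsilon> pi_gt_zero by linarith
    then have "c = 1" by (simp add: c_def)
    have "t \<le> \<epsilon> - T"
      using False n1 divide_left_mono[of 1 "real (n - 1)" "\<epsilon> - T"] by (simp add: t_def)
    then show ?thesis
      using retract_eq[of i] \<open>c = 1\<close> vT[OF i] v i \<open>0 \<le> t\<close> max_gap_bounds by auto
  qed
  have "(\<Sum>i\<in>{1..n-1}. retract v i) = c * T + max 0 (\<epsilon> - T)"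
    using n1 by (simp add: retract_eq sum.distrib sum_distrib_left[symmetric] T_def t_def)
  moreover have "\<epsilon> \<le> c * T + max 0 (\<epsilon> - T) \<and> c * T + max 0 (\<epsilon> - T) \<le> 2*pi"
    using \<epsilon> pi_gt_zero by (cases "T \<le> 2*pi") (auto simp: c_def)
  ultimately show ?thesis
    unfolding admissible_def using coords by auto
qed

lemma retract_id:
  assumes "v \<in> admissible"
  shows "retract v i = v i"
proof -
  have "max (2*pi) (\<Sum>j\<in>{1..n-1}. v j) = 2*pi" "max 0 (\<epsilon> - (\<Sum>j\<in>{1..n-1}. v j)) = 0"
    using assms by (auto simp: admissible_def)
  then show ?thesis by (simp add: retract_def)
qed

lemma continuous_on_retract: "continuous_on X (\<lambda>v. retract v i)"
proof -
  have "max (2*pi) t \<noteq> 0" for t :: real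
    using pi_gt_zero max.cobounded1[of "2*pi" t] by linarith
  then show ?thesis
    unfolding retract_def by (intro continuous_intros) (use n_ge_3 in auto)
qed

lemma continuous_on_vertex: "continuous_on X (\<lambda>u. vertex u k)"
  unfolding vertex_def by (cases "n \<le> k") (simp_all add: continuous_intros)

lemma continuous_on_side: "continuous_on X (\<lambda>u. side u i)"
  unfolding side_def
  by (intro continuous_intros continuous_on_compose2[OF \<gamma>_cont continuous_on_vertex]) auto

lemma continuous_on_adjust: "continuous_on admissible (\<lambda>u. adjust u i)"
proof -
  have defect: "continuous_on admissible (\<lambda>u. defect u j)" for j
    unfolding defect_def perimeter_def
    by (intro continuous_intros continuous_on_side) (use perimeter_pos in \<open>force simp: perimeter_def\<close>)
  have gap: "continuous_on admissible (\<lambda>u. gap u j)" for j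
    unfolding gap_def by (intro continuous_intros continuous_on_vertex)
  show ?thesis
    unfolding adjust_def transfer_def excess_def room_def
    by (intro continuous_intros defect gap)
qed

text \<open>Coordinate \<open>i - 1\<close> of the unit cube is rescaled to gap \<open>i\<close>.\<close>

definition from_cube :: "(nat \<Rightarrow> real) \<Rightarrow> nat \<Rightarrow> real" where
  "from_cube x i = max_gap * x (i - 1)"

lemma from_cube_bounds:
  "x \<in> nat_cube (n - 1) \<Longrightarrow> \<forall>i\<in>{1..n-1}. 0 \<le> from_cube x i \<and> from_cube x i \<le> max_gap"
  using max_gap_bounds \<epsilon> by (auto simp: nat_cube_def from_cube_def)

lemma continuous_on_retract_from_cube: "continuous_on S (\<lambda>x. retract (from_cube x))"
proof -
  have "continuous_on UNIV (\<lambda>x. from_cube x j)" for j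
    unfolding from_cube_def by (intro continuous_intros)
  then have "continuous_on UNIV (\<lambda>x. retract (from_cube x))"
    by (intro continuous_on_coordinatewise_then_product continuous_on_compose2[OF continuous_on_retract])
      (auto intro: continuous_on_coordinatewise_then_product)
  then show ?thesis
    by (rule continuous_on_subset) simp
qed

text \<open>Brouwer's theorem is applied to \<open>adjust\<close> composed with \<open>retract\<close>, transported to the
  unit cube; since \<open>adjust\<close> maps into \<open>admissible\<close>, the fixed point lies there already.\<close>

lemma adjust_has_fixpoint: "\<exists>u\<in>admissible. \<forall>i\<in>{1..n-1}. adjust u i = u i"
proof -
  define f where "f x = (\<lambda>i. if i < n - 1 then adjust (retract (from_cube x)) (Suc i) / max_gap else 0)"
    for x
  have "0 < max_gap" using max_gap_bounds \<epsilon> by linarith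
  have in_admissible: "adjust (retract (from_cube x)) \<in> admissible" if "x \<in> nat_cube (n - 1)" for x
    by (rule adjust_admissible[OF retract_admissible[OF from_cube_bounds[OF that]]])
  have "\<exists>x\<in>nat_cube (n - 1). \<forall>i<n - 1. f x i = x i"
  proof (rule brouwer_nat_cube)
    fix i assume "i < n - 1"
    have "continuous_on (nat_cube (n - 1)) (\<lambda>x. adjust (retract (from_cube x)) (Suc i) / max_gap)"
      using \<open>0 < max_gap\<close> retract_admissible[OF from_cube_bounds] continuous_on_retract_from_cube
      by (intro continuous_intros continuous_on_compose2[OF continuous_on_adjust])
        (auto intro: continuous_on_product_then_coordinatewise)
    then show "continuous_on (nat_cube (n - 1)) (\<lambda>x. f x i)"
      using \<open>i < n - 1\<close> by (simp add: f_def)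
  next
    fix x i assume "x \<in> nat_cube (n - 1)" "i < n - 1"
    then show "0 \<le> f x i \<and> f x i \<le> 1"
      using in_admissible[OF \<open>x \<in> nat_cube (n - 1)\<close>] \<open>0 < max_gap\<close>
      by (auto simp: admissible_def f_def)
  qed
  then obtain x where x: "x \<in> nat_cube (n - 1)" and fixed: "\<forall>i<n - 1. f x i = x i" by blast
  have adjust_x: "adjust (retract (from_cube x)) i = from_cube x i" if "i \<in> {1..n-1}" for i
    using fixed[rule_format, of "i - 1"] that \<open>0 < max_gap\<close>
    by (auto simp: from_cube_def f_def field_simps)
  have "from_cube x \<in> admissible"
    using in_admissible[OF x] adjust_x by (simp add: admissible_def)
  moreover from this have "retract (from_cube x) = from_cube x"
    by (simp add: retract_id fun_eq_iff)
  ultimately show ?thesis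
    using adjust_x by (intro bexI[of _ "from_cube x"]) auto
qed

lemma inscribed_polygon:
  "\<exists>\<sigma> c. \<sigma> 0 = 0 \<and> \<sigma> n = 2*pi \<and> (\<forall>i<n. \<sigma> i < \<sigma> (Suc i)) \<and> c > 0 \<and>
      (\<forall>i\<in>{1..n}. cmod (\<gamma> (\<sigma> i) - \<gamma> (\<sigma> (i - 1))) = c * a i)"
proof -
  obtain u where u: "u \<in> admissible" and fixed: "\<forall>i\<in>{1..n-1}. adjust u i = u i"
    using adjust_has_fixpoint by blast
  then have "\<forall>i\<in>{1..n}. defect u i = 0"
    by (intro defect_zero_if_transfer_zero) (auto simp: adjust_def)
  then have sides: "side u i = perimeter u / (\<Sum>j\<in>{1..n}. a j) * a i" if "i \<in> {1..n}" for i
    using that perimeter_pos[OF u] sum_a_pos by (auto simp: defect_def target_def field_simps)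
  have c: "0 < perimeter u / (\<Sum>j\<in>{1..n}. a j)"
    using perimeter_pos[OF u] sum_a_pos by simp
  show ?thesis
  proof (intro exI conjI allI impI ballI)
    fix i assume "i < n"
    then have "Suc i \<in> {1..n}" by simp
    then have "0 < side u (Suc i)"
      unfolding sides[OF \<open>Suc i \<in> {1..n}\<close>] by (rule mult_pos_pos[OF c a_pos])
    then have "vertex u (Suc i) \<noteq> vertex u i"
      by (auto simp: side_def)
    then show "vertex u i < vertex u (Suc i)"
      using vertex_mono[OF u \<open>i < n\<close>] by simp
  qed (use vertex_0 vertex_n c sides in \<open>auto simp: side_def\<close>)
qed

end

lemma polygon_fixpoint_if_tangent:
  assumes cp: "circle_param \<gamma>" and ct: "cont_turning_tangents_at (\<gamma> ` {0..2*pi}) (\<gamma> 0)"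
    and "3 \<le> n" "\<forall>i\<in>{1..n}. 0 < a i" and \<kappa>: "0 < \<kappa>" "\<kappa> < 1"
    and a_lt: "\<forall>j\<in>{1..n}. a j / (\<Sum>i\<in>{1..n}. a i) < \<kappa> / (1 + \<kappa>)"
  obtains e where "polygon_fixpoint \<gamma> a n e \<kappa>"
proof -
  obtain e \<phi> c1 c2 where e: "0 < e" "e \<le> pi/2" and c: "\<kappa> * c2 \<le> c1" and \<phi>: "mono_on {-e..e} \<phi>"
    and chords: "\<And>s t. s \<in> {-e..e} \<Longrightarrow> t \<in> {-e..e} \<Longrightarrow>
       c1 * \<bar>\<phi> s - \<phi> t\<bar> \<le> cmod (\<gamma> s - \<gamma> t) \<and> cmod (\<gamma> s - \<gamma> t) \<le> c2 * \<bar>\<phi> s - \<phi> t\<bar>"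
    using cont_turning_tangents_chord_bounds[OF cp ct \<kappa>] by metis
  have per: "\<And>t. \<gamma> (t + 2*pi) = \<gamma> t"
    using cp by (simp add: circle_param_def)
  have "polygon_fixpoint \<gamma> a n e \<kappa>"
  proof
    show "continuous_on UNIV \<gamma>" "inj_on \<gamma> {0..<2*pi}"
      using cp by (simp_all add: circle_param_def)
    show "\<kappa> * (\<Sum>i\<in>{1..n} - {j}. cmod (\<gamma> (\<sigma> i) - \<gamma> (\<sigma> (i - 1)))) \<le> cmod (\<gamma> (\<sigma> j) - \<gamma> (\<sigma> (j - 1)))"
      if "\<sigma> 0 = 0" "\<sigma> n = 2*pi" "\<And>i. i < n \<Longrightarrow> \<sigma> i \<le> \<sigma> (Suc i)" "j \<in> {1..n}"
        "2*pi - e \<le> \<sigma> j - \<sigma> (j - 1)" for \<sigma> j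
      using \<kappa> by (intro long_gap_side_dominates[OF per \<phi> chords c _ that]) auto
  qed (use assms(3,4) e \<kappa> a_lt in simp_all)
  then show ?thesis by (rule that)
qed

theorem theorem1p2:
  fixes \<gamma> :: "real \<Rightarrow> complex" and a :: "nat \<Rightarrow> real" and n :: nat
  assumes "circle_param \<gamma>"
    and "cont_turning_tangents_at (\<gamma> ` {0..2*pi}) (\<gamma> 0)"
    and "n \<ge> 3"
    and "\<forall>i\<in>{1..n}. a i > 0"
    and "\<forall>i\<in>{1..n}. a i < (\<Sum>j\<in>{1..n} - {i}. a j)"
  shows "\<exists>\<sigma> :: nat \<Rightarrow> real. \<exists>c::real. \<sigma> 0 = 0 \<and> \<sigma> n = 2*pi \<and>
           (\<forall>i<n. \<sigma> i < \<sigma> (Suc i)) \<and> c > 0 \<and>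
           (\<forall>i\<in>{1..n}. cmod (\<gamma> (\<sigma> i) - \<gamma> (\<sigma> (i - 1))) = c * a i)"
proof -
  have "a j / (\<Sum>i\<in>{1..n}. a i) < 1/2" if "j \<in> {1..n}" for j
    using that assms(4,5) by (intro ratio_lt_half_if_lt_rest) (auto simp: less_imp_le)
  then obtain \<kappa> where \<kappa>: "0 < \<kappa>" "\<kappa> < 1"
    and a_lt: "\<forall>j\<in>{1..n}. a j / (\<Sum>i\<in>{1..n}. a i) < \<kappa> / (1 + \<kappa>)"
    using exists_ratio_bound[where A = "{1..n}" and r = "\<lambda>j. a j / (\<Sum>i\<in>{1..n}. a i)"] by auto
  then obtain e where "polygon_fixpoint \<gamma> a n e \<kappa>"
    using polygon_fixpoint_if_tangent assms(1-4) by blast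
  then show ?thesis
    by (rule polygon_fixpoint.inscribed_polygon)
qed

end
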